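(* Assume the standing assumptions below and the reachability assumption: for all $s,s'\in\mathcal S$ there exists $a\in\mathcal A$ with $P(s'\mid s,a)>0$. Then for every $\theta\in\Theta$, a Markov chain with transition kernel $Q_\theta$ has a unique stationary distribution $\nu_\theta$, and there exist constants $\alpha\in(0,1)$ and $C>0$ such that for all $t\in\mathbb N_+$, $$\sup_{\theta\in\Theta}\max_{x\in\mathcal X}\|Q_\theta^t(x,\cdot)-\nu_\theta\|_{TV}\le C\alpha^t.$$
   Context: $\mathcal S,\mathcal A,\mathcal O$ are finite sets; $\Theta=\Theta_{hi}\times\Theta_{lo}\times\Theta_b$ is a convex compact subset of a Euclidean space. There are policies $\pi_{hi}(o\mid s;\theta_{hi})$ (distribution on $\mathcal O$), $\pi_{lo}(a\mid s,o;\theta_{lo})$ (distribution on $\mathcal A$), $\pi_b(b\mid s,o';\theta_b)$ (distribution on $\{0,1\}$), and an environment kernel $P(s'\mid s,a)$. For a fixed $\zeta\in(0,1)$, $\bar\pi_{hi}(o_t\mid s_t,o_{t-1},b_t;\theta_{hi})$ equals $\pi_{hi}(o_t\mid s_t;\theta_{hi})$ if $b_t=1$, $1-\zeta+\zeta/|\mathcal O|$ if $b_t=0,o_t=o_{t-1}$, and $\zeta/|\mathcal O|$ if $b_t=0,o_t\ne o_{t-1}$. Standing assumptions: there is an open $\tilde\Theta\supseteq\Theta$ on which $\pi_{hi},\pi_{lo},\pi_b$ are defined, strictly positive and continuously differentiable in $\theta$ (for all other arguments). With $\mathcal X=\mathcal S\times\mathcal A\times\mathcal O\times\{0,1\}$,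 $Q_\theta$ is the transition kernel on $\mathcal X$ of $X_t=(S_t,A_t,O_t,B_t)$ under the options-with-failure policy with parameter $\theta$: from $(s,a,o,b)$, draw $S_{t+1}\sim P(\cdot\mid s,a)$, $B_{t+1}\sim\pi_b(\cdot\mid S_{t+1},o;\theta_b)$, $O_{t+1}\sim\bar\pi_{hi}(\cdot\mid S_{t+1},o,B_{t+1};\theta_{hi})$, $A_{t+1}\sim\pi_{lo}(\cdot\mid S_{t+1},O_{t+1};\theta_{lo})$. $Q^t_\theta$ is the $t$-step kernel and $\|\nu_1-\nu_2\|_{TV}=\frac12\sum_x|\nu_1(x)-\nu_2(x)|$. *)

theory Defs
  imports "HOL-Analysis.Analysis"
begin

definition C1_on :: "'p::euclidean_space set \<Rightarrow> ('p \<Rightarrow> real) \<Rightarrow> bool" where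
  "C1_on U f \<longleftrightarrow> (\<exists>D :: 'p \<Rightarrow> ('p \<Rightarrow>\<^sub>L real).
      (\<forall>x\<in>U. (f has_derivative blinfun_apply (D x)) (at x)) \<and> continuous_on U D)"

definition is_dist :: "('x::finite \<Rightarrow> real) \<Rightarrow> bool" where
  "is_dist \<mu> \<longleftrightarrow> (\<forall>x. 0 \<le> \<mu> x) \<and> (\<Sum>x\<in>UNIV. \<mu> x) = 1"

definition pibar :: "real \<Rightarrow> ('h \<Rightarrow> 's \<Rightarrow> 'o::finite \<Rightarrow> real) \<Rightarrow> 'h \<Rightarrow> 's \<Rightarrow> 'o \<Rightarrow> bool \<Rightarrow> 'o \<Rightarrow> real" where
  "pibar \<zeta> pihi th s opv b ov =
     (if b then pihi th s ov
      else if ov = opv then 1 - \<zeta> + \<zeta> / real CARD('o)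
      else \<zeta> / real CARD('o))"

definition Qk :: "real \<Rightarrow> ('s \<Rightarrow> 'a \<Rightarrow> 's \<Rightarrow> real)
   \<Rightarrow> ('h \<Rightarrow> 's \<Rightarrow> 'o::finite \<Rightarrow> real)
   \<Rightarrow> ('l \<Rightarrow> 's \<Rightarrow> 'o \<Rightarrow> 'a \<Rightarrow> real)
   \<Rightarrow> ('b \<Rightarrow> 's \<Rightarrow> 'o \<Rightarrow> bool \<Rightarrow> real)
   \<Rightarrow> ('h \<times> 'l \<times> 'b) \<Rightarrow> ('s \<times> 'a \<times> 'o \<times> bool) \<Rightarrow> ('s \<times> 'a \<times> 'o \<times> bool) \<Rightarrow> real" where
  "Qk \<zeta> P pihi pilo pib \<theta> x y =
     (case \<theta> of (thh, thl, thb) \<Rightarrow>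
      case x of (s, a, ov, b) \<Rightarrow>
      case y of (s', a', ov', b') \<Rightarrow>
        P s a s' * pib thb s' ov b' * pibar \<zeta> pihi thh s' ov b' ov' * pilo thl s' ov' a')"

fun kpow :: "('x::finite \<Rightarrow> 'x \<Rightarrow> real) \<Rightarrow> nat \<Rightarrow> 'x \<Rightarrow> 'x \<Rightarrow> real" where
  "kpow Q 0 x y = (if x = y then 1 else 0)"
| "kpow Q (Suc n) x y = (\<Sum>z\<in>UNIV. kpow Q n x z * Q z y)"

definition stationary :: "('x::finite \<Rightarrow> 'x \<Rightarrow> real) \<Rightarrow> ('x \<Rightarrow> real) \<Rightarrow> bool" where
  "stationary Q \<nu> \<longleftrightarrow> is_dist \<nu> \<and> (\<forall>y. (\<Sum>x\<in>UNIV. \<nu> x * Q x y) = \<nu> y)"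

definition tv_dist :: "('x::finite \<Rightarrow> real) \<Rightarrow> ('x \<Rightarrow> real) \<Rightarrow> real" where
  "tv_dist \<mu>1 \<mu>2 = (1/2) * (\<Sum>x\<in>UNIV. \<bar>\<mu>1 x - \<mu>2 x\<bar>)"

end

theory Submission
  imports Defs
begin

text \<open>All policy factors of \<open>Q\<^sub>\<theta>\<close> are positive and, by reachability, every state can be
  entered from every successor state, so the two-step kernel \<open>Q\<^sub>\<theta>\<^sup>2\<close> is entrywise positive.
  Its entries are continuous in \<open>\<theta>\<close>, hence bounded below by a single \<open>\<delta> > 0\<close> on the compact
  parameter set. This is Doeblin's condition: \<open>Q\<^sub>\<theta>\<^sup>2\<close>
  contracts the \<open>l\<^sub>1\<close>-norm of signed measures of total mass zero by \<open>1 - |X| \<delta>\<close>. That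
  gives uniqueness of the stationary distribution, whose existence follows from Brouwer's
  fixed point theorem, and geometric convergence at a rate independent of \<open>\<theta>\<close>.\<close>

definition stochastic :: "('x::finite \<Rightarrow> 'x \<Rightarrow> real) \<Rightarrow> bool" where
  "stochastic Q \<longleftrightarrow> (\<forall>x y. 0 \<le> Q x y) \<and> (\<forall>x. (\<Sum>y\<in>UNIV. Q x y) = 1)"

definition kernel_push :: "('x::finite \<Rightarrow> real) \<Rightarrow> ('x \<Rightarrow> 'x \<Rightarrow> real) \<Rightarrow> 'x \<Rightarrow> real" where
  "kernel_push \<mu> Q y = (\<Sum>x\<in>UNIV. \<mu> x * Q x y)"

definition l1_norm :: "('x::finite \<Rightarrow> real) \<Rightarrow> real" where
  "l1_norm \<mu> = (\<Sum>x\<in>UNIV. \<bar>\<mu> x\<bar>)"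

lemma stationary_iff_kernel_push: "stationary Q \<nu> \<longleftrightarrow> is_dist \<nu> \<and> kernel_push \<nu> Q = \<nu>"
  by (auto simp: stationary_def kernel_push_def fun_eq_iff)

lemma kernel_push_diff:
  "kernel_push (\<lambda>x. \<mu> x - \<nu> x) Q = (\<lambda>y. kernel_push \<mu> Q y - kernel_push \<nu> Q y)"
  by (simp add: kernel_push_def fun_eq_iff left_diff_distrib sum_subtractf)

lemma sum_kernel_push:
  assumes "\<And>x. (\<Sum>y\<in>UNIV. Q x y) = 1"
  shows "(\<Sum>y\<in>UNIV. kernel_push \<mu> Q y) = (\<Sum>x\<in>UNIV. \<mu> x)"
proof -
  have "(\<Sum>y\<in>UNIV. kernel_push \<mu> Q y) = (\<Sum>x\<in>UNIV. \<mu> x * (\<Sum>y\<in>UNIV. Q x y))"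
    by (simp add: kernel_push_def sum_distrib_left) (rule sum.swap)
  then show ?thesis using assms by simp
qed

lemma kpow_Suc_eq_kernel_push: "kpow Q (Suc n) x = kernel_push (kpow Q n x) Q"
  by (simp add: kernel_push_def fun_eq_iff)

lemma sum_mult_delta:
  fixes f :: "'x::finite \<Rightarrow> real"
  shows "(\<Sum>x\<in>UNIV. f x * (if x = y then 1 else 0)) = f y"
proof -
  have "(\<Sum>x\<in>UNIV. f x * (if x = y then 1 else 0)) = (\<Sum>x\<in>UNIV. if x = y then f y else 0)"
    by (intro sum.cong) auto
  then show ?thesis by simp
qed

lemma kernel_push_kpow_0: "kernel_push \<mu> (kpow Q 0) = \<mu>"
  by (simp add: kernel_push_def fun_eq_iff sum_mult_delta)

lemma kpow_1: "kpow Q 1 x y = Q x y"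
  using sum_mult_delta[of "\<lambda>z. Q z y" x] by (simp add: mult.commute eq_commute[of x])

lemma kpow_2: "kpow Q 2 x y = (\<Sum>z\<in>UNIV. Q x z * Q z y)"
  using kpow.simps(2)[of Q 1] by (simp only: kpow_1 one_add_one[symmetric] Suc_eq_plus1)

lemma kernel_push_kpow_Suc:
  "kernel_push \<mu> (kpow Q (Suc n)) = kernel_push (kernel_push \<mu> (kpow Q n)) Q"
proof
  fix y
  have "kernel_push \<mu> (kpow Q (Suc n)) y = (\<Sum>x\<in>UNIV. \<Sum>z\<in>UNIV. \<mu> x * kpow Q n x z * Q z y)"
    by (simp add: kernel_push_def sum_distrib_left mult.assoc)
  also have "\<dots> = kernel_push (kernel_push \<mu> (kpow Q n)) Q y"
    by (subst sum.swap) (simp add: kernel_push_def sum_distrib_right)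
  finally show "kernel_push \<mu> (kpow Q (Suc n)) y = kernel_push (kernel_push \<mu> (kpow Q n)) Q y" .
qed

lemma kpow_add: "kpow Q (n + m) x = kernel_push (kpow Q n x) (kpow Q m)"
proof (induction m)
  case 0
  then show ?case by (simp add: kernel_push_kpow_0 del: kpow.simps)
next
  case (Suc m)
  have "kpow Q (n + Suc m) x = kernel_push (kpow Q (n + m) x) Q"
    by (simp only: add_Suc_right kpow_Suc_eq_kernel_push)
  then show ?case by (simp only: Suc kernel_push_kpow_Suc)
qed

lemma kernel_push_kpow_fixed:
  assumes "kernel_push \<nu> Q = \<nu>"
  shows "kernel_push \<nu> (kpow Q m) = \<nu>"
  by (induction m) (simp_all add: kernel_push_kpow_0 kernel_push_kpow_Suc assms del: kpow.simps)

lemma stochastic_kpow: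
  assumes "stochastic Q"
  shows "stochastic (kpow Q n)"
proof -
  have rows: "\<And>x. (\<Sum>y\<in>UNIV. Q x y) = 1" and nonneg: "\<And>x y. 0 \<le> Q x y"
    using assms by (auto simp: stochastic_def)
  have "0 \<le> kpow Q n x y" for x y
    by (induction n arbitrary: y) (simp_all add: nonneg sum_nonneg)
  moreover have "(\<Sum>y\<in>UNIV. kpow Q n x y) = 1" for x
  proof (induction n)
    case 0
    then show ?case by simp
  next
    case (Suc n)
    then show ?case by (simp add: kpow_Suc_eq_kernel_push sum_kernel_push rows del: kpow.simps)
  qed
  ultimately show ?thesis by (simp add: stochastic_def)
qed

lemma card_mult_minorant_le_1:
  fixes M :: "'x::finite \<Rightarrow> 'x \<Rightarrow> real"
  assumes "(\<Sum>y\<in>UNIV. M x y) = 1" and "\<And>y. \<delta> \<le> M x y"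
  shows "real CARD('x) * \<delta> \<le> 1"
proof -
  have "real CARD('x) * \<delta> = (\<Sum>y\<in>(UNIV :: 'x set). \<delta>)" by simp
  also have "\<dots> \<le> (\<Sum>y\<in>UNIV. M x y)" using assms(2) by (rule sum_mono)
  finally show ?thesis using assms(1) by simp
qed

text \<open>Lowering every entry of \<open>M\<close> by \<open>\<delta>\<close> does not change the image of a measure of total
  mass 0, and leaves a nonnegative kernel with row sums \<open>1 - |X| \<delta>\<close>.\<close>
lemma l1_norm_kernel_push_contract:
  fixes M :: "'x::finite \<Rightarrow> 'x \<Rightarrow> real"
  assumes rows: "\<And>x. (\<Sum>y\<in>UNIV. M x y) = 1" and lower: "\<And>x y. \<delta> \<le> M x y"
    and mass: "(\<Sum>x\<in>UNIV. \<mu> x) = 0"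
  shows "l1_norm (kernel_push \<mu> M) \<le> (1 - real CARD('x) * \<delta>) * l1_norm \<mu>"
proof -
  have shift: "kernel_push \<mu> M y = (\<Sum>x\<in>UNIV. \<mu> x * (M x y - \<delta>))" for y
    using mass by (simp add: kernel_push_def right_diff_distrib sum_subtractf
        flip: sum_distrib_right)
  have "l1_norm (kernel_push \<mu> M) \<le> (\<Sum>y\<in>UNIV. \<Sum>x\<in>UNIV. \<bar>\<mu> x\<bar> * (M x y - \<delta>))"
    unfolding l1_norm_def shift
    by (intro sum_mono order_trans[OF sum_abs]) (simp add: abs_mult lower)
  also have "\<dots> = (\<Sum>x\<in>UNIV. \<bar>\<mu> x\<bar> * (\<Sum>y\<in>UNIV. M x y - \<delta>))"
    by (subst sum.swap) (simp add: sum_distrib_left)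
  also have "\<dots> = (1 - real CARD('x) * \<delta>) * l1_norm \<mu>"
    by (simp add: rows sum_subtractf l1_norm_def sum_distrib_right mult.commute)
  finally show ?thesis .
qed

lemma stationary_exists:
  fixes Q :: "'x::finite \<Rightarrow> 'x \<Rightarrow> real"
  assumes "stochastic Q"
  shows "\<exists>\<nu>. stationary Q \<nu>"
proof -
  define S where "S = {v :: real^'x. (\<forall>i. 0 \<le> v$i) \<and> (\<Sum>i\<in>UNIV. v$i) = 1}"
  define f where "f = (\<lambda>v :: real^'x. \<chi> y. kernel_push (\<lambda>x. v$x) Q y)"
  have "bounded S"
    unfolding bounded_iff
  proof (intro exI ballI)
    fix v assume "v \<in> S"
    then have "(\<Sum>i\<in>UNIV. \<bar>v$i\<bar>) = 1" by (simp add: S_def)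
    then show "norm v \<le> 1" using norm_le_l1_cart[of v] by simp
  qed
  moreover have "closed S"
    unfolding S_def
    by (intro closed_Collect_conj closed_Collect_all closed_Collect_le closed_Collect_eq
        continuous_intros)
  ultimately have "compact S" by (simp add: compact_eq_bounded_closed)
  moreover have "convex S"
    unfolding convex_def S_def by (auto simp: sum.distrib simp flip: sum_distrib_left)
  moreover have "(\<chi> i. 1 / real CARD('x)) \<in> S" by (simp add: S_def)
  then have "S \<noteq> {}" by blast
  moreover have "continuous_on S f"
    unfolding f_def kernel_push_def by (intro continuous_intros)
  moreover have "f \<in> S \<rightarrow> S"
  proof
    fix v assume "v \<in> S"
    then have "0 \<le> kernel_push (\<lambda>x. v$x) Q y" for y
      using assms by (auto simp: S_def stochastic_def kernel_push_def intro!: sum_nonneg)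
    moreover have "(\<Sum>y\<in>UNIV. kernel_push (\<lambda>x. v$x) Q y) = 1"
      using \<open>v \<in> S\<close> assms by (simp add: S_def stochastic_def sum_kernel_push)
    ultimately show "f v \<in> S" by (simp add: S_def f_def)
  qed
  ultimately obtain v where "v \<in> S" "f v = v" by (rule brouwer)
  have "kernel_push (\<lambda>x. v$x) Q y = v$y" for y
    using arg_cong[OF \<open>f v = v\<close>, of "\<lambda>w. w$y"] by (simp add: f_def)
  then have "stationary Q (\<lambda>x. v$x)"
    using \<open>v \<in> S\<close> by (simp add: stationary_iff_kernel_push is_dist_def S_def fun_eq_iff)
  then show ?thesis by blast
qed

lemma stationary_unique_doeblin:
  fixes Q :: "'x::finite \<Rightarrow> 'x \<Rightarrow> real"
  assumes Q: "stochastic Q" and "0 < \<delta>" and lower: "\<And>x y. \<delta> \<le> kpow Q m x y"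
    and \<mu>: "stationary Q \<mu>" and \<nu>: "stationary Q \<nu>"
  shows "\<mu> = \<nu>"
proof -
  define d where "d = (\<lambda>x. \<mu> x - \<nu> x)"
  have rows: "\<And>x. (\<Sum>y\<in>UNIV. kpow Q m x y) = 1"
    using stochastic_kpow[OF Q] by (simp add: stochastic_def)
  have fixed: "kernel_push d (kpow Q m) = d"
    using \<mu> \<nu> by (simp add: d_def kernel_push_diff kernel_push_kpow_fixed stationary_iff_kernel_push)
  have "(\<Sum>x\<in>UNIV. d x) = 0"
    using \<mu> \<nu> by (simp add: d_def sum_subtractf stationary_def is_dist_def)
  from l1_norm_kernel_push_contract[of "kpow Q m", OF rows lower this]
  have "l1_norm d \<le> (1 - real CARD('x) * \<delta>) * l1_norm d"
    by (simp only: fixed)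
  then have "real CARD('x) * \<delta> * l1_norm d \<le> 0"
    by (simp add: algebra_simps)
  then have "l1_norm d \<le> 0"
    using \<open>0 < \<delta>\<close> by (simp add: mult_le_0_iff)
  then have "l1_norm d = 0"
    by (simp add: l1_norm_def sum_nonneg order_antisym)
  then show ?thesis by (simp add: l1_norm_def d_def fun_eq_iff sum_nonneg_eq_0_iff)
qed

lemma tv_dist_kpow_doeblin:
  fixes Q :: "'x::finite \<Rightarrow> 'x \<Rightarrow> real"
  assumes Q: "stochastic Q" and "0 < m" and lower: "\<And>x y. \<delta> \<le> kpow Q m x y"
    and \<nu>: "stationary Q \<nu>"
  shows "tv_dist (kpow Q t x) \<nu> \<le> (1 - real CARD('x) * \<delta>) ^ (t div m)"
proof -
  define \<beta> where "\<beta> = 1 - real CARD('x) * \<delta>"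
  define d where "d n = (\<lambda>y. kpow Q n x y - \<nu> y)" for n
  have rows: "\<And>n x. (\<Sum>y\<in>UNIV. kpow Q n x y) = 1"
    and nonneg: "\<And>n x y. 0 \<le> kpow Q n x y"
    using stochastic_kpow[OF Q] by (auto simp: stochastic_def)
  have "0 \<le> \<beta>" using card_mult_minorant_le_1[OF rows lower] by (simp add: \<beta>_def)
  have \<nu>_dist: "(\<Sum>y\<in>UNIV. \<nu> y) = 1" "\<And>y. 0 \<le> \<nu> y"
    using \<nu> by (auto simp: stationary_def is_dist_def)
  have "l1_norm (d n) \<le> 2 * \<beta> ^ (n div m)" for n
  proof (induction n rule: less_induct)
    case (less n)
    show ?case
    proof (cases "n < m")
      case True
      have "l1_norm (d n) \<le> (\<Sum>y\<in>UNIV. kpow Q n x y + \<nu> y)"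
        unfolding l1_norm_def d_def using nonneg \<nu>_dist(2)
        by (intro sum_mono) (simp add: abs_le_iff)
      also have "\<dots> = 2" by (simp add: sum.distrib rows \<nu>_dist(1))
      finally show ?thesis using True by simp
    next
      case False
      then obtain k where n: "n = k + m" by (metis add.commute le_Suc_ex not_less)
      have step: "d n = kernel_push (d k) (kpow Q m)"
        using \<nu> by (simp add: n d_def kpow_add kernel_push_diff kernel_push_kpow_fixed
            stationary_iff_kernel_push del: kpow.simps)
      have "(\<Sum>y\<in>UNIV. d k y) = 0" by (simp add: d_def sum_subtractf rows \<nu>_dist(1))
      from l1_norm_kernel_push_contract[of "kpow Q m", OF rows lower this]
      have "l1_norm (d n) \<le> \<beta> * l1_norm (d k)"
        by (simp only: step \<beta>_def)
      also have "\<dots> \<le> \<beta> * (2 * \<beta> ^ (k div m))"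
        using less.IH[of k] \<open>0 < m\<close> \<open>0 \<le> \<beta>\<close> by (intro mult_left_mono) (auto simp: n)
      also have "\<dots> = 2 * \<beta> ^ (n div m)"
        using \<open>0 < m\<close> by (simp add: n)
      finally show ?thesis .
    qed
  qed
  from this[of t] show ?thesis by (simp add: tv_dist_def l1_norm_def d_def \<beta>_def)
qed

lemma power_div_le_geometric:
  fixes \<beta> :: real
  assumes "0 \<le> \<beta>" "\<beta> < 1" "0 < m"
  obtains \<alpha> C where "0 < \<alpha>" "\<alpha> < 1" "0 < C" "\<And>t. \<beta> ^ (t div m) \<le> C * \<alpha> ^ t"
proof -
  define \<alpha> where "\<alpha> = root m (max \<beta> (1/2))"
  have "0 < \<alpha>" "\<alpha> < 1" using assms by (auto simp: \<alpha>_def intro: real_root_gt_zero)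
  have bound: "\<beta> ^ (t div m) \<le> 1 / \<alpha> ^ m * \<alpha> ^ t" for t
  proof -
    have "t \<le> m * (t div m) + m"
      using mult_div_mod_eq[of m t] mod_less_divisor[OF \<open>0 < m\<close>, of t] by linarith
    have "\<beta> ^ (t div m) \<le> max \<beta> (1/2) ^ (t div m)"
      using assms by (intro power_mono) auto
    also have "\<dots> = \<alpha> ^ (m * (t div m))"
      using \<open>0 < m\<close> by (simp add: \<alpha>_def power_mult)
    also have "\<dots> = \<alpha> ^ (m * (t div m) + m) / \<alpha> ^ m"
      using \<open>0 < \<alpha>\<close> by (simp add: power_add)
    also have "\<dots> \<le> \<alpha> ^ t / \<alpha> ^ m"
      using \<open>0 < \<alpha>\<close> \<open>\<alpha> < 1\<close> \<open>t \<le> m * (t div m) + m\<close>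
      by (intro divide_right_mono power_decreasing) auto
    finally show ?thesis by simp
  qed
  show ?thesis
    using that[OF \<open>0 < \<alpha>\<close> \<open>\<alpha> < 1\<close> _ bound] \<open>0 < \<alpha>\<close> by simp
qed

lemma uniform_geometric_ergodicity:
  fixes Q :: "'t \<Rightarrow> 'x::finite \<Rightarrow> 'x \<Rightarrow> real"
  assumes Q: "\<And>\<theta>. \<theta> \<in> T \<Longrightarrow> stochastic (Q \<theta>)" and "0 < m" and "0 < \<delta>"
    and lower: "\<And>\<theta> x y. \<theta> \<in> T \<Longrightarrow> \<delta> \<le> kpow (Q \<theta>) m x y"
  obtains \<nu> \<alpha> C
  where "\<And>\<theta>. \<theta> \<in> T \<Longrightarrow> stationary (Q \<theta>) (\<nu> \<theta>)"
    and "\<And>\<theta> \<mu>. \<theta> \<in> T \<Longrightarrow> stationary (Q \<theta>) \<mu> \<Longrightarrow> \<mu> = \<nu> \<theta>"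
    and "0 < \<alpha>" "\<alpha> < 1" "0 < C"
    and "\<And>\<theta> t x. \<theta> \<in> T \<Longrightarrow> tv_dist (kpow (Q \<theta>) t x) (\<nu> \<theta>) \<le> C * \<alpha> ^ t"
proof -
  \<comment> \<open>Shrinking \<open>\<delta>\<close> keeps \<open>1 - |X| \<delta>'\<close> nonnegative even when \<open>T\<close> is empty.\<close>
  define \<delta>' where "\<delta>' = min \<delta> (1 / real CARD('x))"
  have "0 < \<delta>'" using \<open>0 < \<delta>\<close> by (simp add: \<delta>'_def)
  have lower': "\<delta>' \<le> kpow (Q \<theta>) m x y" if "\<theta> \<in> T" for \<theta> x y
    using lower[OF that] by (simp add: \<delta>'_def min.coboundedI1)
  have "0 \<le> 1 - real CARD('x) * \<delta>'" "1 - real CARD('x) * \<delta>' < 1"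
    using \<open>0 < \<delta>'\<close> by (auto simp: \<delta>'_def min_def field_simps)
  then obtain \<alpha> C where "0 < \<alpha>" "\<alpha> < 1" "0 < C"
    and geometric: "\<And>t. (1 - real CARD('x) * \<delta>') ^ (t div m) \<le> C * \<alpha> ^ t"
    using power_div_le_geometric \<open>0 < m\<close> by metis
  obtain \<nu> where \<nu>: "\<And>\<theta>. \<theta> \<in> T \<Longrightarrow> stationary (Q \<theta>) (\<nu> \<theta>)"
    using stationary_exists[OF Q] by metis
  show ?thesis
  proof (rule that[OF \<nu> _ \<open>0 < \<alpha>\<close> \<open>\<alpha> < 1\<close> \<open>0 < C\<close>])
    show "\<mu> = \<nu> \<theta>" if "\<theta> \<in> T" "stationary (Q \<theta>) \<mu>" for \<theta> \<mu>
      using stationary_unique_doeblin[OF Q[OF that(1)] \<open>0 < \<delta>'\<close> lower'[OF that(1)] that(2) \<nu>[OF that(1)]] .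
    show "tv_dist (kpow (Q \<theta>) t x) (\<nu> \<theta>) \<le> C * \<alpha> ^ t" if "\<theta> \<in> T" for \<theta> t x
      using tv_dist_kpow_doeblin[OF Q[OF that] \<open>0 < m\<close> lower'[OF that] \<nu>[OF that]] geometric
      by (rule order_trans)
  qed
qed

lemma C1_on_imp_continuous_on: "C1_on U f \<Longrightarrow> open U \<Longrightarrow> continuous_on U f"
  unfolding C1_on_def
  by (metis continuous_on_eq_continuous_at has_derivative_continuous)

lemma compact_uniform_lower_bound:
  fixes f :: "'p::finite \<Rightarrow> 't::topological_space \<Rightarrow> real"
  assumes "compact K" and cont: "\<And>p. continuous_on K (f p)" and pos: "\<And>p t. t \<in> K \<Longrightarrow> 0 < f p t"
  shows "\<exists>c>0. \<forall>p. \<forall>t\<in>K. c \<le> f p t"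
proof -
  have "\<exists>c>0. \<forall>t\<in>K. c \<le> f p t" for p
  proof (cases "K = {}")
    case False
    then obtain t0 where "t0 \<in> K" "\<forall>t\<in>K. f p t0 \<le> f p t"
      using continuous_attains_inf[OF \<open>compact K\<close> False cont] by blast
    then show ?thesis using pos by blast
  qed (auto intro: exI[of _ 1])
  then obtain c where c: "\<And>p. 0 < c p" "\<And>p t. t \<in> K \<Longrightarrow> c p \<le> f p t"
    by metis
  have "Min (range c) \<le> f p t" if "t \<in> K" for p t
  proof -
    have "Min (range c) \<le> c p" by (rule Min_le) auto
    also have "\<dots> \<le> f p t" using c(2) that .
    finally show ?thesis .
  qed
  moreover have "0 < Min (range c)" using c(1) by simp
  ultimately show ?thesis by blast
qed

lemma continuous_on_kpow:
  fixes Q :: "'t::topological_space \<Rightarrow> 'x::finite \<Rightarrow> 'x \<Rightarrow> real"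
  assumes "\<And>x y. continuous_on T (\<lambda>\<theta>. Q \<theta> x y)"
  shows "continuous_on T (\<lambda>\<theta>. kpow (Q \<theta>) n x y)"
  by (induction n arbitrary: y) (auto intro!: continuous_on_sum continuous_on_mult assms)

lemma pibar_nonneg:
  assumes "0 < \<zeta>" "\<zeta> < 1" "\<And>ov. 0 \<le> pihi th s ov"
  shows "0 \<le> pibar \<zeta> pihi th s opv b ov"
  using assms by (simp add: pibar_def)

lemma pibar_pos:
  assumes "0 < \<zeta>" "\<zeta> < 1" "\<And>ov. 0 < pihi th s ov"
  shows "0 < pibar \<zeta> pihi th s opv b ov"
  using assms by (simp add: pibar_def add_pos_nonneg)

lemma sum_pibar:
  fixes pihi :: "'h \<Rightarrow> 's \<Rightarrow> 'o::finite \<Rightarrow> real"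
  assumes "is_dist (pihi th s)"
  shows "(\<Sum>ov\<in>UNIV. pibar \<zeta> pihi th s opv b ov) = 1"
proof (cases b)
  case True
  then show ?thesis using assms by (simp add: pibar_def is_dist_def)
next
  case False
  then have "(\<Sum>ov\<in>UNIV. pibar \<zeta> pihi th s opv b ov) =
      (\<Sum>ov\<in>UNIV. \<zeta> / real CARD('o) + (if ov = opv then 1 - \<zeta> else 0))"
    by (intro sum.cong) (auto simp: pibar_def)
  also have "\<dots> = 1" by (simp add: sum.distrib)
  finally show ?thesis .
qed

lemma Qk_apply:
  "Qk \<zeta> P pihi pilo pib \<theta> (s, a, ov, b) (s', a', ov', b') =
    P s a s' * pib (snd (snd \<theta>)) s' ov b' * pibar \<zeta> pihi (fst \<theta>) s' ov b' ov'
      * pilo (fst (snd \<theta>)) s' ov' a'"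
  by (cases \<theta>) (simp add: Qk_def)

lemma sum_UNIV_state_reorder:
  fixes f :: "'s::finite \<times> 'a::finite \<times> 'o::finite \<times> bool \<Rightarrow> real"
  shows "(\<Sum>y\<in>UNIV. f y) = (\<Sum>s'\<in>UNIV. \<Sum>b'\<in>UNIV. \<Sum>ov'\<in>UNIV. \<Sum>a'\<in>UNIV. f (s', a', ov', b'))"
proof -
  have "(\<Sum>y\<in>UNIV. f y) = (\<Sum>(s', b', ov', a')\<in>UNIV. f (s', a', ov', b'))"
    by (rule sum.reindex_bij_witness[of _ "\<lambda>(s', b', ov', a'). (s', a', ov', b')"
          "\<lambda>(s', a', ov', b'). (s', b', ov', a')"]) auto
  then show ?thesis
    by (simp add: sum.cartesian_product flip: UNIV_Times_UNIV)
qed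

lemma stochastic_Qk:
  fixes P :: "'s::finite \<Rightarrow> 'a::finite \<Rightarrow> 's \<Rightarrow> real"
    and pihi :: "'h \<Rightarrow> 's \<Rightarrow> 'o::finite \<Rightarrow> real"
  assumes "0 < \<zeta>" "\<zeta> < 1" and P: "\<And>s a. is_dist (P s a)"
    and hi: "\<And>s. is_dist (pihi thh s)" and lo: "\<And>s ov. is_dist (pilo thl s ov)"
    and b: "\<And>s ov. is_dist (pib thb s ov)"
  shows "stochastic (Qk \<zeta> P pihi pilo pib (thh, thl, thb))"
  unfolding stochastic_def
proof (intro conjI allI)
  fix x y :: "'s \<times> 'a \<times> 'o \<times> bool"
  obtain s a ov b where x: "x = (s, a, ov, b)" by (cases x)
  obtain s' a' ov' b' where y: "y = (s', a', ov', b')" by (cases y)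
  have "0 \<le> pibar \<zeta> pihi thh s' ov b' ov'"
    using hi \<open>0 < \<zeta>\<close> \<open>\<zeta> < 1\<close> by (intro pibar_nonneg) (auto simp: is_dist_def)
  then show "0 \<le> Qk \<zeta> P pihi pilo pib (thh, thl, thb) x y"
    using P lo b by (simp add: x y Qk_apply is_dist_def)
next
  fix x :: "'s \<times> 'a \<times> 'o \<times> bool"
  obtain s a ov b where x: "x = (s, a, ov, b)" by (cases x)
  have "(\<Sum>y\<in>UNIV. Qk \<zeta> P pihi pilo pib (thh, thl, thb) x y)
      = (\<Sum>s'\<in>UNIV. P s a s' * (\<Sum>b'\<in>UNIV. pib thb s' ov b' *
          (\<Sum>ov'\<in>UNIV. pibar \<zeta> pihi thh s' ov b' ov' * (\<Sum>a'\<in>UNIV. pilo thl s' ov' a'))))"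
    by (simp add: x sum_UNIV_state_reorder Qk_apply sum_distrib_left mult.assoc)
  also have "\<dots> = 1"
    using P lo b hi by (simp add: is_dist_def sum_pibar)
  finally show "(\<Sum>y\<in>UNIV. Qk \<zeta> P pihi pilo pib (thh, thl, thb) x y) = 1" .
qed

lemma kpow_Qk_2_pos:
  fixes P :: "'s::finite \<Rightarrow> 'a::finite \<Rightarrow> 's \<Rightarrow> real"
    and pihi :: "'h \<Rightarrow> 's \<Rightarrow> 'o::finite \<Rightarrow> real"
  assumes "0 < \<zeta>" "\<zeta> < 1" and P: "\<And>s a. is_dist (P s a)"
    and hi: "\<And>s. is_dist (pihi thh s)" and lo: "\<And>s ov. is_dist (pilo thl s ov)"
    and b: "\<And>s ov. is_dist (pib thb s ov)"
    and hi_pos: "\<And>s ov. 0 < pihi thh s ov" and lo_pos: "\<And>s ov a. 0 < pilo thl s ov a"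
    and b_pos: "\<And>s ov b. 0 < pib thb s ov b"
    and reach: "\<And>s s'. \<exists>a. P s a s' > 0"
  shows "0 < kpow (Qk \<zeta> P pihi pilo pib (thh, thl, thb)) 2 x y"
proof -
  let ?Q = "Qk \<zeta> P pihi pilo pib (thh, thl, thb)"
  have "stochastic ?Q" using \<open>0 < \<zeta>\<close> \<open>\<zeta> < 1\<close> P hi lo b by (rule stochastic_Qk)
  obtain s a ov b where x: "x = (s, a, ov, b)" by (cases x)
  obtain s' a' ov' b' where y: "y = (s', a', ov', b')" by (cases y)
  obtain s1 where "0 < P s a s1"
  proof (rule ccontr)
    assume "\<not> thesis"
    with that have "P s a s1 \<le> 0" for s1 by (meson not_le)
    then have "(\<Sum>s1\<in>UNIV. P s a s1) \<le> 0" by (simp add: sum_nonpos)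
    with P[of s a] show False by (simp add: is_dist_def)
  qed
  obtain a1 where "0 < P s1 a1 s'" using reach by blast
  have "0 < pibar \<zeta> pihi thh s'' opv bb ov''" for s'' opv bb ov''
    using \<open>0 < \<zeta>\<close> \<open>\<zeta> < 1\<close> hi_pos by (rule pibar_pos)
  then have "0 < ?Q x (s1, a1, ov, True) * ?Q (s1, a1, ov, True) y"
    using \<open>0 < P s a s1\<close> \<open>0 < P s1 a1 s'\<close> lo_pos b_pos by (simp add: x y Qk_apply)
  also have "\<dots> \<le> (\<Sum>z\<in>UNIV. ?Q x z * ?Q z y)"
    using \<open>stochastic ?Q\<close> by (intro member_le_sum) (auto simp: stochastic_def simp del: split_paired_All)
  finally show ?thesis by (simp add: kpow_2)
qed

lemma continuous_on_Qk:
  assumes hi: "\<And>s ov. continuous_on Uh (\<lambda>th. pihi th s ov)"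
    and lo: "\<And>s ov a. continuous_on Ul (\<lambda>th. pilo th s ov a)"
    and b: "\<And>s ov b. continuous_on Ub (\<lambda>th. pib th s ov b)"
  shows "continuous_on (Uh \<times> Ul \<times> Ub) (\<lambda>\<theta>. Qk \<zeta> P pihi pilo pib \<theta> x y)"
proof -
  obtain s a ov b where x: "x = (s, a, ov, b)" by (cases x)
  obtain s' a' ov' b' where y: "y = (s', a', ov', b')" by (cases y)
  have "continuous_on (Uh \<times> Ul \<times> Ub) (\<lambda>\<theta>. pihi (fst \<theta>) s ov)" for s ov
    by (rule continuous_on_compose2[OF hi continuous_on_fst[OF continuous_on_id]]) auto
  then have "continuous_on (Uh \<times> Ul \<times> Ub) (\<lambda>\<theta>. pibar \<zeta> pihi (fst \<theta>) s opv bb ov)" for s opv bb ov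
    by (cases bb) (simp_all add: pibar_def)
  moreover have "continuous_on (Uh \<times> Ul \<times> Ub) (\<lambda>\<theta>. pilo (fst (snd \<theta>)) s ov a)" for s ov a
    by (rule continuous_on_compose2[OF lo continuous_on_fst[OF continuous_on_snd[OF continuous_on_id]]])
      auto
  moreover have "continuous_on (Uh \<times> Ul \<times> Ub) (\<lambda>\<theta>. pib (snd (snd \<theta>)) s ov b)" for s ov b
    by (rule continuous_on_compose2[OF b continuous_on_snd[OF continuous_on_snd[OF continuous_on_id]]])
      auto
  ultimately show ?thesis
    unfolding x y Qk_apply by (intro continuous_on_mult continuous_on_const)
qed

theorem proposition1:
  fixes P :: "'s::finite \<Rightarrow> 'a::finite \<Rightarrow> 's \<Rightarrow> real"
    and pihi :: "'h::euclidean_space \<Rightarrow> 's \<Rightarrow> 'o::finite \<Rightarrow> real"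
    and pilo :: "'l::euclidean_space \<Rightarrow> 's \<Rightarrow> 'o \<Rightarrow> 'a \<Rightarrow> real"
    and pib :: "'b::euclidean_space \<Rightarrow> 's \<Rightarrow> 'o \<Rightarrow> bool \<Rightarrow> real"
    and Th :: "'h set" and Tl :: "'l set" and Tb :: "'b set"
    and Uh :: "'h set" and Ul :: "'l set" and Ub :: "'b set"
    and \<zeta> :: real
  assumes zeta: "0 < \<zeta>" "\<zeta> < 1"
    and Theta_convex: "convex (Th \<times> Tl \<times> Tb)"
    and Theta_compact: "compact (Th \<times> Tl \<times> Tb)"
    and U_open: "open Uh" "open Ul" "open Ub"
    and U_sub: "Th \<subseteq> Uh" "Tl \<subseteq> Ul" "Tb \<subseteq> Ub"
    and P_dist: "\<And>s a. is_dist (P s a)"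
    and pihi_dist: "\<And>th s. th \<in> Uh \<Longrightarrow> is_dist (pihi th s)"
    and pilo_dist: "\<And>th s ov. th \<in> Ul \<Longrightarrow> is_dist (pilo th s ov)"
    and pib_dist: "\<And>th s ov. th \<in> Ub \<Longrightarrow> is_dist (pib th s ov)"
    and pihi_pos: "\<And>th s ov. th \<in> Uh \<Longrightarrow> 0 < pihi th s ov"
    and pilo_pos: "\<And>th s ov a. th \<in> Ul \<Longrightarrow> 0 < pilo th s ov a"
    and pib_pos: "\<And>th s ov b. th \<in> Ub \<Longrightarrow> 0 < pib th s ov b"
    and pihi_C1: "\<And>s ov. C1_on Uh (\<lambda>th. pihi th s ov)"
    and pilo_C1: "\<And>s ov a. C1_on Ul (\<lambda>th. pilo th s ov a)"
    and pib_C1: "\<And>s ov b. C1_on Ub (\<lambda>th. pib th s ov b)"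
    and reach: "\<And>s s'. \<exists>a. P s a s' > 0"
  shows "\<exists>\<nu> :: ('h \<times> 'l \<times> 'b) \<Rightarrow> ('s \<times> 'a \<times> 'o \<times> bool) \<Rightarrow> real.
           (\<forall>\<theta>\<in>Th \<times> Tl \<times> Tb.
              stationary (Qk \<zeta> P pihi pilo pib \<theta>) (\<nu> \<theta>) \<and>
              (\<forall>\<mu>. stationary (Qk \<zeta> P pihi pilo pib \<theta>) \<mu> \<longrightarrow> \<mu> = \<nu> \<theta>)) \<and>
           (\<exists>\<alpha> C. 0 < \<alpha> \<and> \<alpha> < 1 \<and> 0 < C \<and>
              (\<forall>t::nat. t \<ge> 1 \<longrightarrow>
                 (\<forall>\<theta>\<in>Th \<times> Tl \<times> Tb. \<forall>x.
                    tv_dist (kpow (Qk \<zeta> P pihi pilo pib \<theta>) t x) (\<nu> \<theta>) \<le> C * \<alpha> ^ t)))"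
proof -
  let ?Q = "Qk \<zeta> P pihi pilo pib"
  define T where "T = Th \<times> Tl \<times> Tb"
  have Q_stochastic: "stochastic (?Q \<theta>)" and Q2_pos: "0 < kpow (?Q \<theta>) 2 x y"
    if "\<theta> \<in> T" for \<theta> x y
    using that U_sub
    by (auto simp: T_def intro!: stochastic_Qk kpow_Qk_2_pos zeta P_dist pihi_dist pilo_dist
        pib_dist pihi_pos pilo_pos pib_pos reach)
  have "continuous_on (Uh \<times> Ul \<times> Ub) (\<lambda>\<theta>. ?Q \<theta> x y)" for x y
    by (intro continuous_on_Qk C1_on_imp_continuous_on pihi_C1 pilo_C1 pib_C1 U_open)
  moreover have "T \<subseteq> Uh \<times> Ul \<times> Ub" using U_sub by (auto simp: T_def)
  ultimately have "continuous_on T (\<lambda>\<theta>. ?Q \<theta> x y)" for x y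
    by (rule continuous_on_subset)
  then have cont: "continuous_on T (\<lambda>\<theta>. kpow (?Q \<theta>) 2 (fst p) (snd p))" for p
    by (rule continuous_on_kpow)
  have "compact T" using Theta_compact by (simp add: T_def)
  obtain \<delta> where "0 < \<delta>" and lower: "\<forall>p. \<forall>\<theta>\<in>T. \<delta> \<le> kpow (?Q \<theta>) 2 (fst p) (snd p)"
    using compact_uniform_lower_bound[of T "\<lambda>p \<theta>. kpow (?Q \<theta>) 2 (fst p) (snd p)",
        OF \<open>compact T\<close> cont Q2_pos] by blast
  have minorization: "\<delta> \<le> kpow (?Q \<theta>) 2 x y" if "\<theta> \<in> T" for \<theta> x y
    using lower that by (metis fst_conv snd_conv)
  show ?thesis
  proof (rule uniform_geometric_ergodicity[of T ?Q 2 \<delta>])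
    fix \<nu> \<alpha> C
    assume "\<And>\<theta>. \<theta> \<in> T \<Longrightarrow> stationary (?Q \<theta>) (\<nu> \<theta>)"
      and "\<And>\<theta> \<mu>. \<theta> \<in> T \<Longrightarrow> stationary (?Q \<theta>) \<mu> \<Longrightarrow> \<mu> = \<nu> \<theta>"
      and "0 < \<alpha>" "\<alpha> < 1" "0 < C"
      and "\<And>\<theta> t x. \<theta> \<in> T \<Longrightarrow> tv_dist (kpow (?Q \<theta>) t x) (\<nu> \<theta>) \<le> C * \<alpha> ^ t"
    then show ?thesis unfolding T_def[symmetric] by blast
  qed (use Q_stochastic minorization \<open>0 < \<delta>\<close> in auto)
qed

end
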